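(* Let $(U_t)_{t\ge0}$ and $(V_t)_{t\ge0}$ be independent irreducible continuous-time Markov chains with finite state spaces $\Omega_U$ and $\Omega_V$, and let $\pi_V$ be the stationary distribution of $V$. Let $\mu$ be a probability measure on $\Omega_U\times\Omega_V$ (the law of $(U_0,V_0)$ under $\mathbb P_\mu$), and let $\tau$ be a stopping time for the process $(U_t,V_t)_{t\ge0}$ such that (1) $\mathbb P_\mu(\tau>0)=1$; (2) $\mathbb E_\mu[\tau]<\infty$; (3) $V_0$ and $V_\tau$ have the same law under $\mathbb P_\mu$. Then for all $v\in\Omega_V$, \[\mathbb E_\mu\Big[\int_0^\tau\mathbf 1(V_t=v)\,dt\Big]=\mathbb E_\mu[\tau]\,\pi_V(v).\] *)

theory Defs
  imports "HOL-Analysis.Analysis" "HOL-Probability.Probability"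
begin

fun matpow :: "('s::finite \<Rightarrow> 's \<Rightarrow> real) \<Rightarrow> nat \<Rightarrow> 's \<Rightarrow> 's \<Rightarrow> real" where
  "matpow Q 0 x y = (if x = y then 1 else 0)"
| "matpow Q (Suc n) x y = (\<Sum>z\<in>UNIV. matpow Q n x z * Q z y)"

definition trans_fun :: "('s::finite \<Rightarrow> 's \<Rightarrow> real) \<Rightarrow> real \<Rightarrow> 's \<Rightarrow> 's \<Rightarrow> real" where
  "trans_fun Q t x y = (\<Sum>n. t ^ n / fact n * matpow Q n x y)"

definition generator :: "('s::finite \<Rightarrow> 's \<Rightarrow> real) \<Rightarrow> bool" where
  "generator Q \<longleftrightarrow> (\<forall>x y. x \<noteq> y \<longrightarrow> 0 \<le> Q x y) \<and> (\<forall>x. (\<Sum>y\<in>UNIV. Q x y) = 0)"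

definition irreducible_gen :: "('s::finite \<Rightarrow> 's \<Rightarrow> real) \<Rightarrow> bool" where
  "irreducible_gen Q \<longleftrightarrow> generator Q \<and> (\<forall>x y. (x, y) \<in> {(a, b). a \<noteq> b \<and> 0 < Q a b}\<^sup>*)"

definition stationary_dist :: "('s::finite \<Rightarrow> 's \<Rightarrow> real) \<Rightarrow> ('s \<Rightarrow> real) \<Rightarrow> bool" where
  "stationary_dist Q \<pi> \<longleftrightarrow> (\<forall>x. 0 \<le> \<pi> x) \<and> (\<Sum>x\<in>UNIV. \<pi> x) = 1 \<and>
     (\<forall>y. (\<Sum>x\<in>UNIV. \<pi> x * Q x y) = 0)"

text \<open>Generator of the pair (U,V) of two independently evolving chains.\<close>
definition prod_gen :: "('u::finite \<Rightarrow> 'u \<Rightarrow> real) \<Rightarrow> ('v::finite \<Rightarrow> 'v \<Rightarrow> real)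
    \<Rightarrow> 'u \<times> 'v \<Rightarrow> 'u \<times> 'v \<Rightarrow> real" where
  "prod_gen QU QV p q =
     (if snd p = snd q then QU (fst p) (fst q) else 0) + (if fst p = fst q then QV (snd p) (snd q) else 0)"

definition ctmc :: "'a measure \<Rightarrow> ('s::finite \<Rightarrow> 's \<Rightarrow> real) \<Rightarrow> (real \<Rightarrow> 'a \<Rightarrow> 's) \<Rightarrow> bool" where
  "ctmc M Q X \<longleftrightarrow>
     (\<forall>t\<ge>0. X t \<in> measurable M (count_space UNIV)) \<and>
     (\<forall>\<omega>\<in>space M. \<forall>t\<ge>0. \<exists>e>0. \<forall>s. t \<le> s \<and> s < t + e \<longrightarrow> X s \<omega> = X t \<omega>) \<and>
     (\<forall>(n::nat) (ts::nat \<Rightarrow> real) (xs::nat \<Rightarrow> 's).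
        0 \<le> ts 0 \<longrightarrow> (\<forall>i<n. ts i \<le> ts (Suc i)) \<longrightarrow>
        measure M {\<omega>\<in>space M. \<forall>i\<le>n. X (ts i) \<omega> = xs i} =
        measure M {\<omega>\<in>space M. X (ts 0) \<omega> = xs 0} *
          (\<Prod>i<n. trans_fun Q (ts (Suc i) - ts i) (xs i) (xs (Suc i))))"

definition nat_filtration :: "'a measure \<Rightarrow> (real \<Rightarrow> 'a \<Rightarrow> 's) \<Rightarrow> real \<Rightarrow> 'a measure" where
  "nat_filtration M X t =
     sigma (space M) {X s -` {z} \<inter> space M | s z. 0 \<le> s \<and> s \<le> t}"

end

theory Submission
  imports Defs
begin

text \<open>Write \<open>\<nu>(v)\<close> for the expected time the \<open>V\<close>-coordinate spends in \<open>v\<close> before \<open>\<tau>\<close>.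
  Dynkin's formula \<open>E \<phi>(X\<^sub>\<tau>) - E \<phi>(X\<^sub>0) = E \<integral>\<^sub>0\<^sup>\<tau> (Q \<phi>)(X\<^sub>s) ds\<close>, applied to
  \<open>\<phi>(u, w) = 1(w = y)\<close>, has vanishing left side because \<open>V\<^sub>0\<close> and \<open>V\<^sub>\<tau>\<close> have the same law;
  since the rows of \<open>Q\<^sub>U\<close> sum to zero, the product generator acts on \<open>\<phi>\<close> as \<open>Q\<^sub>V\<close> does, so the right
  side is \<open>\<Sum>\<^sub>w \<nu>(w) Q\<^sub>V(w, y)\<close>. Hence \<open>\<nu>\<close> is an invariant measure of the irreducible
  generator \<open>Q\<^sub>V\<close> with total mass \<open>E \<tau>\<close>, and therefore equals \<open>E \<tau> \<cdot> \<pi>\<^sub>V\<close>.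

  Dynkin's formula is proved by discretising time with mesh \<open>h\<close>: the increments of \<open>\<phi>(X)\<close>
  between consecutive grid points before \<open>\<tau>\<close> are controlled by the Markov property (the event
  \<open>\<tau> > k h\<close> is known at time \<open>k h\<close>) and by \<open>P\<^sub>h = I + h Q + O(h\<^sup>2)\<close>; as \<open>h \<rightarrow> 0\<close>,
  right-continuity of the paths and dominated convergence (\<open>E \<tau> < \<infinity>\<close>) give the limit.\<close>

section \<open>Estimates for the matrix exponential\<close>

definition entry_norm :: "('s::finite \<Rightarrow> 's \<Rightarrow> real) \<Rightarrow> real" where
  "entry_norm Q = (\<Sum>a\<in>UNIV. \<Sum>b\<in>UNIV. \<bar>Q a b\<bar>)"

definition l1_norm :: "('s::finite \<Rightarrow> real) \<Rightarrow> real" where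
  "l1_norm \<phi> = (\<Sum>x\<in>UNIV. \<bar>\<phi> x\<bar>)"

lemma entry_norm_nonneg: "0 \<le> entry_norm Q"
  by (simp add: entry_norm_def sum_nonneg)

lemma column_abs_sum_le_entry_norm: "(\<Sum>a\<in>UNIV. \<bar>Q a y\<bar>) \<le> entry_norm Q"
  unfolding entry_norm_def by (intro sum_mono member_le_sum) auto

lemma abs_le_entry_norm: "\<bar>Q x y\<bar> \<le> entry_norm Q"
  using member_le_sum[of x UNIV "\<lambda>a. \<bar>Q a y\<bar>"] column_abs_sum_le_entry_norm[of Q y] by simp

lemma l1_norm_nonneg: "0 \<le> l1_norm \<phi>"
  by (simp add: l1_norm_def sum_nonneg)

lemma abs_le_l1_norm: "\<bar>\<phi> x\<bar> \<le> l1_norm \<phi>"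
  unfolding l1_norm_def by (rule member_le_sum[where f="\<lambda>z. \<bar>\<phi> z\<bar>"]) auto

lemma matpow_abs_le: "\<bar>matpow Q n x y\<bar> \<le> entry_norm Q ^ n"
proof (induction n arbitrary: x y)
  case 0
  then show ?case by simp
next
  case (Suc n)
  have "\<bar>matpow Q (Suc n) x y\<bar> \<le> (\<Sum>z\<in>UNIV. \<bar>matpow Q n x z\<bar> * \<bar>Q z y\<bar>)"
    by (simp add: abs_mult[symmetric] sum_abs)
  also have "\<dots> \<le> (\<Sum>z\<in>UNIV. entry_norm Q ^ n * \<bar>Q z y\<bar>)"
    by (intro sum_mono mult_right_mono Suc.IH) auto
  also have "\<dots> \<le> entry_norm Q ^ n * entry_norm Q"
    by (simp add: sum_distrib_left[symmetric] mult_left_mono column_abs_sum_le_entry_norm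
        entry_norm_nonneg)
  finally show ?case by (simp add: mult.commute)
qed

lemma matpow_Suc_0 [simp]: "matpow Q (Suc 0) x y = Q x y"
proof -
  have "(if x = z then 1 else 0) * Q z y = (if x = z then Q x y else 0)" for z
    by simp
  then show ?thesis
    by (simp add: sum.delta)
qed

lemma summable_exp_series: "summable (\<lambda>n. c ^ n / fact n :: real)"
  using summable_exp[of c] by (simp add: divide_inverse mult.commute)

lemma summable_trans_fun_series: "summable (\<lambda>n. t ^ n / fact n * matpow Q n x y)"
proof (rule summable_comparison_test[OF _ summable_exp_series[of "\<bar>t\<bar> * entry_norm Q"]])
  have "\<bar>t ^ n / fact n * matpow Q n x y\<bar> \<le> (\<bar>t\<bar> * entry_norm Q) ^ n / fact n" for n
    using mult_left_mono[OF matpow_abs_le[of Q n x y], of "\<bar>t\<bar> ^ n / fact n"]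
    by (simp add: abs_mult power_abs power_mult_distrib)
  then show "\<exists>N. \<forall>n\<ge>N. norm (t ^ n / fact n * matpow Q n x y) \<le> (\<bar>t\<bar> * entry_norm Q) ^ n / fact n"
    by auto
qed

text \<open>The exponential series is cut after its linear term; the tail is dominated by the tail
  of the scalar series for \<open>exp (entry_norm Q)\<close>.\<close>
lemma trans_fun_second_order:
  assumes h: "0 \<le> h" "h \<le> 1"
  shows "\<bar>trans_fun Q h x y - ((if x = y then 1 else 0) + h * Q x y)\<bar> \<le> h\<^sup>2 * exp (entry_norm Q)"
proof -
  let ?a = "\<lambda>n. h ^ n / fact n * matpow Q n x y"
  let ?e = "\<lambda>n. entry_norm Q ^ n / fact n"
  have "sum ?a {..<2} = (if x = y then 1 else 0) + h * Q x y"
    by (simp add: numeral_2_eq_2 del: matpow.simps(2))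
  then have split: "trans_fun Q h x y = (\<Sum>n. ?a (n + 2)) + ((if x = y then 1 else 0) + h * Q x y)"
    using suminf_split_initial_segment[OF summable_trans_fun_series[of h Q x y], of 2]
    by (simp add: trans_fun_def)
  have se: "summable (\<lambda>n. ?e (n + 2))"
    using summable_exp_series by (rule summable_ignore_initial_segment)
  have "norm (\<Sum>n. ?a (n + 2)) \<le> (\<Sum>n. h\<^sup>2 * ?e (n + 2))"
  proof (rule norm_suminf_le)
    fix n
    have "h ^ (n + 2) \<le> h\<^sup>2"
      using h by (intro power_decreasing) auto
    then have "h ^ (n + 2) * entry_norm Q ^ (n + 2) \<le> h\<^sup>2 * entry_norm Q ^ (n + 2)"
      by (simp add: mult_right_mono entry_norm_nonneg)
    moreover have "\<bar>?a (n + 2)\<bar> = h ^ (n + 2) / fact (n + 2) * \<bar>matpow Q (n + 2) x y\<bar>"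
      using h by (simp add: abs_mult del: matpow.simps)
    moreover have "\<dots> \<le> h ^ (n + 2) / fact (n + 2) * entry_norm Q ^ (n + 2)"
      using h by (intro mult_left_mono matpow_abs_le) auto
    ultimately show "norm (?a (n + 2)) \<le> h\<^sup>2 * ?e (n + 2)"
      by (simp add: divide_simps)
  qed (use se in \<open>rule summable_mult\<close>)
  also have "\<dots> = h\<^sup>2 * (exp (entry_norm Q) - (1 + entry_norm Q))"
    using suminf_split_initial_segment[OF summable_exp_series[of "entry_norm Q"], of 2]
      exp_converges[of "entry_norm Q", THEN sums_unique] suminf_mult[OF se, of "h\<^sup>2"]
    by (simp add: numeral_2_eq_2 divide_inverse mult.commute)
  also have "\<dots> \<le> h\<^sup>2 * exp (entry_norm Q)"
    using entry_norm_nonneg[of Q] by (simp add: mult_left_mono)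
  finally show ?thesis
    using split by simp
qed

definition trans_op :: "('s::finite \<Rightarrow> 's \<Rightarrow> real) \<Rightarrow> real \<Rightarrow> ('s \<Rightarrow> real) \<Rightarrow> 's \<Rightarrow> real" where
  "trans_op Q h \<phi> x = (\<Sum>z\<in>UNIV. trans_fun Q h x z * \<phi> z)"

definition gen_op :: "('s::finite \<Rightarrow> 's \<Rightarrow> real) \<Rightarrow> ('s \<Rightarrow> real) \<Rightarrow> 's \<Rightarrow> real" where
  "gen_op Q \<phi> x = (\<Sum>z\<in>UNIV. Q x z * \<phi> z)"

lemma trans_op_second_order:
  assumes h: "0 \<le> h" "h \<le> 1"
  shows "\<bar>trans_op Q h \<phi> x - \<phi> x - h * gen_op Q \<phi> x\<bar> \<le> h\<^sup>2 * (exp (entry_norm Q) * l1_norm \<phi>)"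
proof -
  have "(if x = z then 1 else 0) * \<phi> z = (if x = z then \<phi> x else 0)" for z
    by simp
  then have "(\<Sum>z\<in>UNIV. (if x = z then 1 else 0) * \<phi> z) = \<phi> x"
    by (simp add: sum.delta)
  then have "trans_op Q h \<phi> x - \<phi> x - h * gen_op Q \<phi> x =
      (\<Sum>z\<in>UNIV. (trans_fun Q h x z - ((if x = z then 1 else 0) + h * Q x z)) * \<phi> z)"
    by (simp add: trans_op_def gen_op_def algebra_simps sum_subtractf sum.distrib sum_distrib_left)
  also have "\<bar>\<dots>\<bar> \<le> (\<Sum>z\<in>UNIV. \<bar>trans_fun Q h x z - ((if x = z then 1 else 0) + h * Q x z)\<bar> * \<bar>\<phi> z\<bar>)"
    by (simp add: abs_mult[symmetric] sum_abs)
  also have "\<dots> \<le> (\<Sum>z\<in>UNIV. h\<^sup>2 * exp (entry_norm Q) * \<bar>\<phi> z\<bar>)"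
    by (intro sum_mono mult_right_mono trans_fun_second_order h) auto
  finally show ?thesis
    by (simp add: l1_norm_def sum_distrib_left mult.assoc)
qed

lemma abs_gen_op_le: "\<bar>gen_op Q \<phi> x\<bar> \<le> entry_norm Q * l1_norm \<phi>"
proof -
  have "\<bar>gen_op Q \<phi> x\<bar> \<le> (\<Sum>z\<in>UNIV. \<bar>Q x z\<bar> * \<bar>\<phi> z\<bar>)"
    by (simp add: gen_op_def abs_mult[symmetric] sum_abs)
  also have "\<dots> \<le> (\<Sum>z\<in>UNIV. entry_norm Q * \<bar>\<phi> z\<bar>)"
    by (intro sum_mono mult_right_mono abs_le_entry_norm) auto
  finally show ?thesis
    by (simp add: l1_norm_def sum_distrib_left)
qed

lemma trans_op_lipschitz:
  assumes h: "0 \<le> h" "h \<le> 1"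
  shows "\<bar>trans_op Q h \<phi> x - \<phi> x\<bar> \<le> h * ((entry_norm Q + exp (entry_norm Q)) * l1_norm \<phi>)"
proof -
  let ?c = "exp (entry_norm Q) * l1_norm \<phi>"
  have "h\<^sup>2 * ?c \<le> h * ?c"
    using h l1_norm_nonneg[of \<phi>] by (simp add: power2_eq_square mult_left_le_one_le mult_right_mono)
  moreover have "\<bar>h * gen_op Q \<phi> x\<bar> \<le> h * (entry_norm Q * l1_norm \<phi>)"
    using abs_gen_op_le[of Q \<phi> x] h by (simp add: abs_mult mult_left_mono)
  ultimately show ?thesis
    using trans_op_second_order[OF h, of Q \<phi> x] by (simp add: algebra_simps abs_le_iff)
qed

section \<open>Invariant measures of irreducible generators\<close>

definition invariant_measure :: "('s::finite \<Rightarrow> 's \<Rightarrow> real) \<Rightarrow> ('s \<Rightarrow> real) \<Rightarrow> bool" where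
  "invariant_measure Q \<mu> \<longleftrightarrow> (\<forall>y. (\<Sum>x\<in>UNIV. \<mu> x * Q x y) = 0)"

lemma generator_diag_eq:
  assumes "generator Q"
  shows "Q y y = - (\<Sum>b\<in>UNIV - {y}. Q y b)"
  using assms sum.remove[of UNIV y "Q y"] by (simp add: generator_def)

lemma generator_diag_nonpos:
  assumes "generator Q"
  shows "Q y y \<le> 0"
  using generator_diag_eq[OF assms, of y] sum_nonneg[of "UNIV - {y}" "Q y"] assms
  by (auto simp: generator_def)

lemma invariant_measure_abs:
  assumes gen: "generator Q" and inv: "invariant_measure Q \<mu>"
  shows "invariant_measure Q (\<lambda>x. \<bar>\<mu> x\<bar>)"
proof -
  have off: "x \<noteq> y \<Longrightarrow> 0 \<le> Q x y" for x y
    using gen by (simp add: generator_def)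
  have split: "(\<Sum>x\<in>UNIV. g x) = g y + (\<Sum>x\<in>UNIV - {y}. g x)" for g :: "'a \<Rightarrow> real" and y
    by (rule sum.remove) auto
  have ge: "0 \<le> (\<Sum>x\<in>UNIV. \<bar>\<mu> x\<bar> * Q x y)" for y
  proof -
    have "\<bar>\<mu> y\<bar> * \<bar>Q y y\<bar> = \<bar>\<Sum>x\<in>UNIV - {y}. \<mu> x * Q x y\<bar>"
      using inv split[of "\<lambda>x. \<mu> x * Q x y" y] by (simp add: invariant_measure_def abs_mult[symmetric])
    also have "\<dots> \<le> (\<Sum>x\<in>UNIV - {y}. \<bar>\<mu> x\<bar> * Q x y)"
      by (rule order_trans[OF sum_abs], rule sum_mono) (simp add: abs_mult off abs_of_nonneg)
    finally show ?thesis
      using generator_diag_nonpos[OF gen, of y] split[of "\<lambda>x. \<bar>\<mu> x\<bar> * Q x y" y] by simp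
  qed
  \<comment> \<open>Rows of a generator sum to zero, so these nonnegative column sums add up to zero.\<close>
  have "(\<Sum>y\<in>UNIV. \<Sum>x\<in>UNIV. \<bar>\<mu> x\<bar> * Q x y) = 0"
    using gen by (subst sum.swap) (simp add: sum_distrib_left[symmetric] generator_def)
  then show ?thesis
    using sum_nonneg_eq_0_iff[of UNIV "\<lambda>y. \<Sum>x\<in>UNIV. \<bar>\<mu> x\<bar> * Q x y"] ge
    by (auto simp: invariant_measure_def)
qed

lemma invariant_measure_vanishing_propagates:
  assumes gen: "generator Q" and inv: "invariant_measure Q \<rho>" and nonneg: "\<And>x. 0 \<le> \<rho> x"
    and path: "(a, b) \<in> {(a, b). a \<noteq> b \<and> 0 < Q a b}\<^sup>*" and zero: "\<rho> b = 0"
  shows "\<rho> a = 0"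
  using path zero
proof (induction rule: converse_rtrancl_induct)
  case (step a c)
  then have "\<rho> c = 0"
    by blast
  then have "(\<Sum>x\<in>UNIV - {c}. \<rho> x * Q x c) = 0"
    using inv sum.remove[of UNIV c "\<lambda>x. \<rho> x * Q x c"] by (simp add: invariant_measure_def)
  then have "\<forall>x\<in>UNIV - {c}. \<rho> x * Q x c = 0"
    using gen nonneg by (subst sum_nonneg_eq_0_iff[symmetric]) (auto simp: generator_def)
  then show ?case
    using step.hyps(1) by auto
qed

text \<open>The positive part of an invariant measure is invariant, and its zeros propagate along
  every path of the chain.\<close>
lemma invariant_measure_zero_sum:
  assumes irr: "irreducible_gen Q" and inv: "invariant_measure Q \<mu>" and sum0: "(\<Sum>x\<in>UNIV. \<mu> x) = 0"
  shows "\<mu> x = 0"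
proof (cases "\<exists>y. \<mu> y \<le> 0")
  case True
  then obtain y where y: "\<mu> y \<le> 0"
    by blast
  have gen: "generator Q"
    using irr by (simp add: irreducible_gen_def)
  define \<rho> where "\<rho> x = (\<bar>\<mu> x\<bar> + \<mu> x) / 2" for x
  have "invariant_measure Q \<rho>"
    using invariant_measure_abs[OF gen inv] inv
    by (simp add: invariant_measure_def \<rho>_def add_divide_distrib sum.distrib distrib_right
        sum_divide_distrib[symmetric])
  then have \<rho>0: "\<rho> a = 0" for a
    using invariant_measure_vanishing_propagates[OF gen, of \<rho> a y] y irr
    by (auto simp: \<rho>_def irreducible_gen_def)
  have "\<mu> a \<le> 0" for a
    using \<rho>0[of a] by (simp add: \<rho>_def abs_if split: if_splits)
  then show ?thesis
    using sum0 sum_nonneg_eq_0_iff[of UNIV "\<lambda>x. - \<mu> x"] by (simp add: sum_negf)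
next
  case False
  then have "0 < (\<Sum>x\<in>UNIV. \<mu> x)"
    by (intro sum_pos) (auto simp: not_le)
  then show ?thesis
    using sum0 by simp
qed

lemma invariant_measure_eq_stationary:
  assumes irr: "irreducible_gen Q" and st: "stationary_dist Q \<pi>" and inv: "invariant_measure Q \<nu>"
  shows "\<nu> x = (\<Sum>y\<in>UNIV. \<nu> y) * \<pi> x"
proof -
  define c where "c = (\<Sum>y\<in>UNIV. \<nu> y)"
  define \<mu> where "\<mu> x = \<nu> x - c * \<pi> x" for x
  have "(\<Sum>x\<in>UNIV. \<mu> x * Q x y) = (\<Sum>x\<in>UNIV. \<nu> x * Q x y) - c * (\<Sum>x\<in>UNIV. \<pi> x * Q x y)" for y
    by (simp add: \<mu>_def algebra_simps sum_subtractf sum_distrib_left)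
  then have "invariant_measure Q \<mu>"
    using inv st by (simp add: invariant_measure_def stationary_dist_def)
  moreover have "(\<Sum>x\<in>UNIV. \<mu> x) = 0"
    using st by (simp add: \<mu>_def c_def stationary_dist_def sum_subtractf sum_distrib_left[symmetric])
  ultimately have "\<mu> x = 0"
    by (rule invariant_measure_zero_sum[OF irr])
  then show ?thesis
    by (simp add: \<mu>_def c_def)
qed

lemma gen_op_prod_gen_snd:
  assumes "generator QU"
  shows "gen_op (prod_gen QU QV) (\<lambda>q. f (snd q)) p = gen_op QV f (snd p)"
proof -
  obtain u0 w0 where p: "p = (u0, w0)"
    by (cases p)
  have entry: "prod_gen QU QV p (u, w) * f w =
      (if w = w0 then QU u0 u * f w0 else 0) + (if u = u0 then QV w0 w * f w else 0)" for u w
    by (auto simp: p prod_gen_def distrib_right)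
  have "gen_op (prod_gen QU QV) (\<lambda>q. f (snd q)) p =
      (\<Sum>u\<in>UNIV. \<Sum>w\<in>UNIV. prod_gen QU QV p (u, w) * f w)"
    unfolding gen_op_def
    by (simp add: UNIV_Times_UNIV[symmetric] sum.cartesian_product case_prod_unfold
        del: UNIV_Times_UNIV)
  also have "\<dots> = (\<Sum>u\<in>UNIV. QU u0 u * f w0) + (\<Sum>w\<in>UNIV. QV w0 w * f w)"
  proof -
    have "(\<Sum>w\<in>UNIV. if u = u0 then QV w0 w * f w else 0) =
        (if u = u0 then \<Sum>w\<in>UNIV. QV w0 w * f w else 0)" for u
      by simp
    then show ?thesis
      by (simp only: entry sum.distrib sum.delta sum.delta' finite UNIV_I if_True)
  qed
  also have "(\<Sum>u\<in>UNIV. QU u0 u * f w0) = 0"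
    using assms by (simp add: generator_def sum_distrib_right[symmetric])
  finally show ?thesis
    by (simp add: gen_op_def p)
qed

section \<open>The Markov property with respect to the natural filtration\<close>

lemma (in prob_space) prob_Int_mult_on_sigma_sets:
  assumes G: "Int_stable G" "G \<subseteq> Pow (space M)" "sigma_sets (space M) G \<subseteq> events"
    and BC: "B \<in> events" "C \<in> events" "prob B = prob C * c"
    and gen: "\<And>A. A \<in> G \<Longrightarrow> prob (A \<inter> B) = prob (A \<inter> C) * c"
    and A: "A \<in> sigma_sets (space M) G"
  shows "prob (A \<inter> B) = prob (A \<inter> C) * c"
  using G(1,2) A
proof (induction rule: sigma_sets_induct_disjoint)
  case (basic A)
  then show ?case
    by (rule gen)
next
  case empty
  then show ?case
    by simp
next
  case (compl A)
  have "A \<in> events"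
    using compl.hyps G(3) by blast
  have "prob ((space M - A) \<inter> D) = prob D - prob (A \<inter> D)" if "D \<in> events" for D
  proof -
    have "(space M - A) \<inter> D = D - A \<inter> D"
      using sets.sets_into_space[OF that] by blast
    then show ?thesis
      using that \<open>A \<in> events\<close> by (simp add: finite_measure_Diff)
  qed
  from this[OF BC(1)] this[OF BC(2)] show ?case
    using BC(3) compl.IH by (simp add: right_diff_distrib mult.commute)
next
  case (union A)
  have "range A \<subseteq> events"
    using union.hyps(2) G(3) by blast
  then have sums: "(\<lambda>i. prob (A i \<inter> D)) sums prob ((\<Union>i. A i) \<inter> D)" if "D \<in> events" for D
    using that union.hyps(1)
    by (subst Int_commute, subst Int_UN_distrib, subst (2) Int_commute, intro finite_measure_UNION)
      (auto simp: disjoint_family_on_def Int_commute)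
  have "(\<lambda>i. prob (A i \<inter> C) * c) sums prob ((\<Union>i. A i) \<inter> B)"
    using sums[OF BC(1)] union.IH by simp
  moreover have "(\<lambda>i. prob (A i \<inter> C) * c) sums (prob ((\<Union>i. A i) \<inter> C) * c)"
    using sums[OF BC(2)] by (rule sums_mult2)
  ultimately show ?case
    by (rule sums_unique2)
qed

locale ctmc_process = prob_space M
  for M :: "'a measure" and Q :: "'s::finite \<Rightarrow> 's \<Rightarrow> real" and X :: "real \<Rightarrow> 'a \<Rightarrow> 's" +
  assumes ctmc: "ctmc M Q X"
begin

lemma X_measurable: "0 \<le> t \<Longrightarrow> X t \<in> measurable M (count_space UNIV)"
  using ctmc by (simp add: ctmc_def)

lemma path_right_locally_const:
  "\<omega> \<in> space M \<Longrightarrow> 0 \<le> t \<Longrightarrow> \<exists>e>0. \<forall>s. t \<le> s \<and> s < t + e \<longrightarrow> X s \<omega> = X t \<omega>"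
  using ctmc by (simp add: ctmc_def)

lemma prob_path:
  "0 \<le> ts 0 \<Longrightarrow> \<forall>i<n. ts i \<le> ts (Suc i) \<Longrightarrow>
    prob {\<omega>\<in>space M. \<forall>i\<le>n. X (ts i) \<omega> = xs i} =
    prob {\<omega>\<in>space M. X (ts 0) \<omega> = xs 0} * (\<Prod>i<n. trans_fun Q (ts (Suc i) - ts i) (xs i) (xs (Suc i)))"
  using ctmc unfolding ctmc_def by blast

lemma measurable_state_fun [measurable]: "0 \<le> t \<Longrightarrow> (\<lambda>\<omega>. f (X t \<omega>) :: real) \<in> borel_measurable M"
  by (rule measurable_compose[OF X_measurable]) auto

definition state_event :: "real \<Rightarrow> 's \<Rightarrow> 'a set" where
  "state_event s y = {\<omega>\<in>space M. X s \<omega> = y}"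

definition cylinder :: "(real \<times> 's) set \<Rightarrow> 'a set" where
  "cylinder S = {\<omega>\<in>space M. \<forall>(s, y)\<in>S. X s \<omega> = y}"

definition past_cylinders :: "real \<Rightarrow> 'a set set" where
  "past_cylinders t = {cylinder S | S. finite S \<and> (\<forall>(s, y)\<in>S. 0 \<le> s \<and> s \<le> t)}"

lemma state_event_sets [measurable]: "0 \<le> s \<Longrightarrow> state_event s y \<in> events"
  using measurable_sets[OF X_measurable, of s "{y}"] by (simp add: state_event_def vimage_def Int_def conj_commute)

lemma state_event_subset_space: "state_event s y \<subseteq> space M"
  by (auto simp: state_event_def)

lemma cylinder_insert: "cylinder (insert (s, y) S) = state_event s y \<inter> cylinder S"
  by (auto simp: cylinder_def state_event_def)

lemma cylinder_sets: "finite S \<Longrightarrow> \<forall>(s, y)\<in>S. 0 \<le> s \<Longrightarrow> cylinder S \<in> events"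
proof (induction S rule: finite_induct)
  case empty
  then show ?case
    by (simp add: cylinder_def)
next
  case (insert p S)
  then show ?case
    by (cases p) (auto simp: cylinder_insert)
qed

lemma past_cylinders_Int_stable: "Int_stable (past_cylinders t)"
proof (rule Int_stableI)
  fix A B assume "A \<in> past_cylinders t" "B \<in> past_cylinders t"
  then obtain S S' where "A = cylinder S" "B = cylinder S'" "finite S" "finite S'"
    "\<forall>(s, y)\<in>S \<union> S'. 0 \<le> s \<and> s \<le> t"
    unfolding past_cylinders_def by blast
  moreover have "cylinder S \<inter> cylinder S' = cylinder (S \<union> S')"
    by (auto simp: cylinder_def case_prod_beta)
  ultimately show "A \<inter> B \<in> past_cylinders t"
    unfolding past_cylinders_def by blast
qed

lemma sigma_past_cylinders_subset: "sigma_sets (space M) (past_cylinders t) \<subseteq> events"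
  by (rule sets.sigma_sets_subset) (auto simp: past_cylinders_def intro!: cylinder_sets)

lemma nat_filtration_subset_past_cylinders:
  "sets (nat_filtration M X t) \<subseteq> sigma_sets (space M) (past_cylinders t)"
proof -
  let ?G = "{X s -` {z} \<inter> space M | s z. 0 \<le> s \<and> s \<le> t}"
  have "X s -` {z} \<inter> space M = cylinder {(s, z)}" for s z
    by (auto simp: cylinder_def)
  then have "?G \<subseteq> past_cylinders t"
    unfolding past_cylinders_def by force
  moreover have "sets (nat_filtration M X t) = sigma_sets (space M) ?G"
    unfolding nat_filtration_def by (rule sets_measure_of) auto
  ultimately show ?thesis
    by (simp add: sigma_sets_mono')
qed

lemma space_nat_filtration: "space (nat_filtration M X t) = space M"
  unfolding nat_filtration_def by (rule space_measure_of) auto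

lemma cylinder_eq_graph:
  assumes "\<And>s y. (s, y) \<in> S \<Longrightarrow> g s = y"
  shows "cylinder S = {\<omega>\<in>space M. \<forall>s\<in>fst ` S. X s \<omega> = g s}"
  using assms by (fastforce simp: cylinder_def)

lemma cylinder_eq_path:
  assumes fin: "finite S" and times: "\<forall>(s, y)\<in>S. 0 \<le> s \<and> s \<le> t" and tx: "(t, x) \<in> S"
    and consistent: "\<And>s y y'. (s, y) \<in> S \<Longrightarrow> (s, y') \<in> S \<Longrightarrow> y = y'"
  obtains n ts xs where "0 \<le> ts 0" "\<forall>i<n. ts i \<le> ts (Suc i)" "ts n = t" "xs n = x"
    and "cylinder S = {\<omega>\<in>space M. \<forall>i\<le>n. X (ts i) \<omega> = xs i}"
proof -
  define L where "L = sorted_list_of_set (fst ` S)"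
  define n where "n = length L - 1"
  define g where "g s = (THE y. (s, y) \<in> S)" for s
  have g: "g s = y" if "(s, y) \<in> S" for s y
    unfolding g_def using that consistent by (intro the_equality) auto
  have setL: "set L = fst ` S" and sortL: "sorted L"
    using fin by (simp_all add: L_def)
  have tL: "t \<in> set L"
    using tx setL by force
  have lenL: "length L = Suc n"
    using tL unfolding n_def by (cases L) auto
  have L_times: "0 \<le> L ! i \<and> L ! i \<le> t" if "i \<le> n" for i
  proof -
    have "L ! i \<in> fst ` S"
      using that lenL setL by (metis le_imp_less_Suc nth_mem)
    then show ?thesis
      using times by auto
  qed
  have "L ! n = t"
  proof -
    obtain j where j: "j < length L" "L ! j = t"
      using tL by (metis in_set_conv_nth)
    have "L ! j \<le> L ! n"
      using sortL j lenL by (intro sorted_nth_mono) auto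
    then show ?thesis
      using j L_times[of n] by simp
  qed
  moreover have "\<forall>i<n. L ! i \<le> L ! Suc i"
    using sortL lenL by (auto intro: sorted_nth_mono)
  moreover have "cylinder S = {\<omega>\<in>space M. \<forall>s\<in>set L. X s \<omega> = g s}"
    using cylinder_eq_graph[OF g] setL by simp
  then have "cylinder S = {\<omega>\<in>space M. \<forall>i\<le>n. X (L ! i) \<omega> = g (L ! i)}"
    using lenL by (simp add: all_set_conv_all_nth less_Suc_eq_le)
  ultimately show ?thesis
    by (intro that[of "\<lambda>i. L ! i" n "\<lambda>i. g (L ! i)"]) (use L_times[of 0] g[OF tx] in auto)
qed

lemma prob_cylinder_extend:
  assumes fin: "finite S" and times: "\<forall>(s, y)\<in>S. 0 \<le> s \<and> s \<le> t" and tx: "(t, x) \<in> S"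
    and h: "0 \<le> h"
  shows "prob (cylinder (insert (t + h, z) S)) = prob (cylinder S) * trans_fun Q h x z"
proof (cases "\<forall>s y y'. (s, y) \<in> S \<longrightarrow> (s, y') \<in> S \<longrightarrow> y = y'")
  case True
  then have consistent: "\<And>s y y'. (s, y) \<in> S \<Longrightarrow> (s, y') \<in> S \<Longrightarrow> y = y'"
    by blast
  obtain n ts xs where ts: "0 \<le> ts 0" "\<forall>i<n. ts i \<le> ts (Suc i)" "ts n = t" "xs n = x"
    and cyl: "cylinder S = {\<omega>\<in>space M. \<forall>i\<le>n. X (ts i) \<omega> = xs i}"
    by (rule cylinder_eq_path[OF fin times tx consistent])
  define ts' where "ts' = ts(Suc n := t + h)"
  define xs' where "xs' = xs(Suc n := z)"
  let ?P = "\<lambda>n ts xs. \<Prod>i<n. trans_fun Q (ts (Suc i) - ts i) (xs i) (xs (Suc i))"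
  have "cylinder (insert (t + h, z) S) = {\<omega>\<in>space M. \<forall>i\<le>Suc n. X (ts' i) \<omega> = xs' i}"
    by (auto simp: cylinder_insert cyl state_event_def ts'_def xs'_def le_Suc_eq)
  also have "prob \<dots> = prob {\<omega>\<in>space M. X (ts' 0) \<omega> = xs' 0} * ?P (Suc n) ts' xs'"
    using ts h by (intro prob_path) (auto simp: ts'_def less_Suc_eq)
  also have "?P (Suc n) ts' xs' = ?P n ts xs * trans_fun Q h x z"
  proof -
    have "?P n ts' xs' = ?P n ts xs"
      by (intro prod.cong) (auto simp: ts'_def xs'_def)
    then show ?thesis
      using ts by (simp add: ts'_def xs'_def)
  qed
  also have "prob {\<omega>\<in>space M. X (ts' 0) \<omega> = xs' 0} * (?P n ts xs * trans_fun Q h x z) =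
      prob (cylinder S) * trans_fun Q h x z"
    using ts by (simp add: cyl prob_path ts'_def xs'_def)
  finally show ?thesis .
next
  case False
  then obtain s y y' where sy: "(s, y) \<in> S" "(s, y') \<in> S" "y \<noteq> y'"
    by blast
  have "X s \<omega> = y \<and> X s \<omega> = y'" if "\<omega> \<in> cylinder S" for \<omega>
    using that sy unfolding cylinder_def by auto
  then have "cylinder S = {}"
    using sy(3) by blast
  moreover have "cylinder (insert (t + h, z) S) \<subseteq> cylinder S"
    by (auto simp: cylinder_def)
  ultimately show ?thesis
    by simp
qed

theorem markov_property:
  assumes t: "0 \<le> t" and h: "0 \<le> h" and A: "A \<in> sigma_sets (space M) (past_cylinders t)"
  shows "prob (A \<inter> (state_event t x \<inter> state_event (t + h) z)) =
    prob (A \<inter> state_event t x) * trans_fun Q h x z"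
proof (rule prob_Int_mult_on_sigma_sets[OF past_cylinders_Int_stable _ sigma_past_cylinders_subset])
  have "prob (cylinder S \<inter> (state_event t x \<inter> state_event (t + h) z)) =
      prob (cylinder S \<inter> state_event t x) * trans_fun Q h x z"
    if "finite S" "\<forall>(s, y)\<in>S. 0 \<le> s \<and> s \<le> t" for S
    using prob_cylinder_extend[of "insert (t, x) S" t x h z] that t h
    by (simp add: cylinder_insert Int_ac)
  then show "prob (C \<inter> (state_event t x \<inter> state_event (t + h) z)) =
      prob (C \<inter> state_event t x) * trans_fun Q h x z" if "C \<in> past_cylinders t" for C
    using that unfolding past_cylinders_def by blast
  moreover have "space M \<in> past_cylinders t"
    unfolding past_cylinders_def cylinder_def by (intro CollectI exI[of _ "{}"]) auto
  ultimately have "prob (space M \<inter> (state_event t x \<inter> state_event (t + h) z)) =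
      prob (space M \<inter> state_event t x) * trans_fun Q h x z"
    by blast
  then show "prob (state_event t x \<inter> state_event (t + h) z) =
      prob (state_event t x) * trans_fun Q h x z"
    using state_event_subset_space[of t x] by (simp add: Int_absorb1 le_infI1)
qed (use t h A in \<open>auto simp: past_cylinders_def cylinder_def\<close>)

lemma prob_eq_sum_state_events:
  assumes B: "B \<in> events" and s: "0 \<le> s"
  shows "prob B = (\<Sum>y\<in>UNIV. prob (B \<inter> state_event s y))"
proof -
  have "B = (\<Union>y\<in>UNIV. B \<inter> state_event s y)"
    using sets.sets_into_space[OF B] by (auto simp: state_event_def)
  moreover have "disjoint_family_on (\<lambda>y. B \<inter> state_event s y) UNIV"
    by (auto simp: disjoint_family_on_def state_event_def)
  then have "prob (\<Union>y\<in>UNIV. B \<inter> state_event s y) = (\<Sum>y\<in>UNIV. prob (B \<inter> state_event s y))"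
    using B s by (intro finite_measure_finite_Union) auto
  ultimately show ?thesis
    by simp
qed

definition state_expectation :: "'a set \<Rightarrow> real \<Rightarrow> ('s \<Rightarrow> real) \<Rightarrow> real" where
  "state_expectation A t \<psi> = (\<Sum>y\<in>UNIV. \<psi> y * prob (A \<inter> state_event t y))"

lemma integral_indicator_state_fun:
  assumes A: "A \<in> events" and t: "0 \<le> t"
  shows "(\<integral>\<omega>. indicator A \<omega> * \<psi> (X t \<omega>) \<partial>M) = state_expectation A t \<psi>"
proof -
  have "(\<integral>\<omega>. indicator A \<omega> * \<psi> (X t \<omega>) \<partial>M) =
      (\<integral>\<omega>. (\<Sum>y\<in>UNIV. \<psi> y * indicator (A \<inter> state_event t y) \<omega>) \<partial>M)"
  proof (rule Bochner_Integration.integral_cong[OF refl])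
    fix \<omega> assume "\<omega> \<in> space M"
    then have "\<psi> y * indicator (A \<inter> state_event t y) \<omega> =
        (if y = X t \<omega> then indicator A \<omega> * \<psi> (X t \<omega>) else 0)" for y
      by (auto simp: state_event_def indicator_def)
    then show "indicator A \<omega> * \<psi> (X t \<omega>) = (\<Sum>y\<in>UNIV. \<psi> y * indicator (A \<inter> state_event t y) \<omega>)"
      by (simp add: sum.delta)
  qed
  also have "\<dots> = state_expectation A t \<psi>"
    using A t by (subst Bochner_Integration.integral_sum)
      (auto simp: state_expectation_def emeasure_finite top.not_eq_extremum[symmetric])
  finally show ?thesis .
qed

lemma integrable_indicator_state_fun:
  fixes \<psi> :: "'s \<Rightarrow> real"
  shows "A \<in> events \<Longrightarrow> 0 \<le> t \<Longrightarrow> integrable M (\<lambda>\<omega>. indicator A \<omega> * \<psi> (X t \<omega>))"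
  by (rule integrable_const_bound[where B="l1_norm \<psi>"])
    (auto simp: indicator_def abs_le_l1_norm l1_norm_nonneg)

lemma abs_state_expectation_le:
  assumes A: "A \<in> events" and t: "0 \<le> t" and bound: "\<And>x. \<bar>\<psi> x\<bar> \<le> B"
  shows "\<bar>state_expectation A t \<psi>\<bar> \<le> B * prob A"
proof -
  have "\<bar>state_expectation A t \<psi>\<bar> \<le> (\<Sum>y\<in>UNIV. B * prob (A \<inter> state_event t y))"
    unfolding state_expectation_def
    by (rule order_trans[OF sum_abs], rule sum_mono) (simp add: abs_mult bound mult_right_mono)
  also have "\<dots> = B * prob A"
    using prob_eq_sum_state_events[OF A t] by (simp add: sum_distrib_left)
  finally show ?thesis .
qed

lemma state_expectation_markov:
  assumes t: "0 \<le> t" and h: "0 \<le> h" and A: "A \<in> sigma_sets (space M) (past_cylinders t)"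
  shows "state_expectation A (t + h) \<phi> = state_expectation A t (trans_op Q h \<phi>)"
proof -
  have A_sets: "A \<in> events"
    using A sigma_past_cylinders_subset by blast
  have "prob (A \<inter> state_event (t + h) z) = (\<Sum>x\<in>UNIV. prob (A \<inter> state_event t x) * trans_fun Q h x z)" for z
    using prob_eq_sum_state_events[of "A \<inter> state_event (t + h) z" t] A_sets t h
      markov_property[OF t h A, of _ z]
    by (simp add: Int_ac)
  then have "state_expectation A (t + h) \<phi> =
      (\<Sum>z\<in>UNIV. \<Sum>x\<in>UNIV. prob (A \<inter> state_event t x) * (trans_fun Q h x z * \<phi> z))"
    by (simp add: state_expectation_def sum_distrib_left mult_ac)
  also have "\<dots> = state_expectation A t (trans_op Q h \<phi>)"
    by (subst sum.swap) (simp add: state_expectation_def trans_op_def sum_distrib_left mult_ac)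
  finally show ?thesis .
qed

lemma integral_indicator_markov:
  assumes t: "0 \<le> t" and h: "0 \<le> h" and A: "A \<in> sigma_sets (space M) (past_cylinders t)"
  shows "(\<integral>\<omega>. indicator A \<omega> * \<psi> (X (t + h) \<omega>) \<partial>M) = state_expectation A t (trans_op Q h \<psi>)"
proof -
  have "A \<in> events"
    using A sigma_past_cylinders_subset by blast
  from integral_indicator_state_fun[OF this add_nonneg_nonneg[OF t h]] show ?thesis
    unfolding state_expectation_markov[OF t h A] .
qed

end

section \<open>Riemann sums of right-continuous step functions\<close>

definition grid_count :: "real \<Rightarrow> real \<Rightarrow> nat" where
  "grid_count h T = nat \<lceil>T / h\<rceil>"

lemma less_grid_count_iff:
  assumes h: "0 < h"
  shows "k < grid_count h T \<longleftrightarrow> real k * h < T"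
proof -
  have "k < grid_count h T \<longleftrightarrow> real k < T / h"
    by (simp add: grid_count_def zless_nat_eq_int_zless less_ceiling_iff)
  also have "\<dots> \<longleftrightarrow> real k * h < T"
    using h by (simp add: pos_less_divide_eq)
  finally show ?thesis .
qed

lemma grid_count_bounds:
  assumes h: "0 < h" and T: "0 \<le> T"
  shows "T \<le> real (grid_count h T) * h" and "real (grid_count h T) * h < T + h"
proof -
  have count: "real (grid_count h T) = of_int \<lceil>T / h\<rceil>"
    using h T by (simp add: grid_count_def)
  show "T \<le> real (grid_count h T) * h"
    by (metis count h le_of_int_ceiling pos_divide_le_eq)
  show "real (grid_count h T) * h < T + h"
    using h ceiling_correct[of "T / h"] by (simp add: count pos_less_divide_eq[symmetric] add_divide_distrib)
qed

definition mesh :: "nat \<Rightarrow> real" where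
  "mesh m = inverse (real (Suc m))"

lemma mesh_pos: "0 < mesh m"
  by (simp add: mesh_def)

lemma mesh_le_one: "mesh m \<le> 1"
  by (simp add: mesh_def inverse_le_1_iff)

lemma mesh_tendsto_zero: "mesh \<longlonglongrightarrow> 0"
  unfolding mesh_def by (rule LIMSEQ_inverse_real_of_nat)

lemma eventually_mesh_less: "0 < e \<Longrightarrow> eventually (\<lambda>m. mesh m < e) sequentially"
  using order_tendstoD(2)[OF mesh_tendsto_zero] by blast

lemma floor_grid_cell:
  assumes h: "0 < h" and s: "0 \<le> s"
  shows "real (nat \<lfloor>s / h\<rfloor>) * h \<le> s" and "s < real (Suc (nat \<lfloor>s / h\<rfloor>)) * h"
    and "s \<in> {real k * h..<real (Suc k) * h} \<longleftrightarrow> k = nat \<lfloor>s / h\<rfloor>"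
proof -
  have f0: "0 \<le> \<lfloor>s / h\<rfloor>"
    using h s by simp
  then have r: "real (nat \<lfloor>s / h\<rfloor>) = of_int \<lfloor>s / h\<rfloor>"
    by simp
  show "real (nat \<lfloor>s / h\<rfloor>) * h \<le> s"
    by (metis r h of_int_floor_le pos_le_divide_eq)
  show "s < real (Suc (nat \<lfloor>s / h\<rfloor>)) * h"
    using h real_of_int_floor_add_one_gt[of "s / h"] by (simp add: r pos_divide_less_eq algebra_simps)
  have "s \<in> {real k * h..<real (Suc k) * h} \<longleftrightarrow> real k \<le> s / h \<and> s / h < real k + 1"
    using h by (simp add: pos_le_divide_eq pos_divide_less_eq algebra_simps)
  also have "\<dots> \<longleftrightarrow> \<lfloor>s / h\<rfloor> = int k"
    by (simp add: floor_eq_iff)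
  also have "\<dots> \<longleftrightarrow> k = nat \<lfloor>s / h\<rfloor>"
    using f0 by auto
  finally show "s \<in> {real k * h..<real (Suc k) * h} \<longleftrightarrow> k = nat \<lfloor>s / h\<rfloor>" .
qed

definition right_locally_const :: "(real \<Rightarrow> 'b) \<Rightarrow> bool" where
  "right_locally_const f \<longleftrightarrow> (\<forall>s\<ge>0. \<exists>e>0. \<forall>r. s \<le> r \<and> r < s + e \<longrightarrow> f r = f s)"

lemma right_locally_const_comp: "right_locally_const f \<Longrightarrow> right_locally_const (\<lambda>s. g (f s))"
  unfolding right_locally_const_def by metis

lemma eventually_right_grid_point_eq:
  assumes f: "right_locally_const f" and s: "0 \<le> s"
  shows "eventually (\<lambda>m. f (real (Suc (nat \<lfloor>s / mesh m\<rfloor>)) * mesh m) = f s) sequentially"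
proof -
  obtain e where e: "e > 0" "\<And>r. s \<le> r \<Longrightarrow> r < s + e \<Longrightarrow> f r = f s"
    using f s unfolding right_locally_const_def by blast
  show ?thesis
    using eventually_mesh_less[OF e(1)]
  proof eventually_elim
    case (elim m)
    have "real (Suc (nat \<lfloor>s / mesh m\<rfloor>)) * mesh m = real (nat \<lfloor>s / mesh m\<rfloor>) * mesh m + mesh m"
      by (simp add: algebra_simps)
    then show ?case
      using floor_grid_cell(1,2)[OF mesh_pos s, of m] elim by (intro e(2)) auto
  qed
qed

definition grid_step :: "real \<Rightarrow> nat \<Rightarrow> (real \<Rightarrow> real) \<Rightarrow> real \<Rightarrow> real" where
  "grid_step h N f s = (\<Sum>k<N. indicator {real k * h..<real (Suc k) * h} s * f (real (Suc k) * h))"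

lemma grid_step_measurable [measurable]: "grid_step h N f \<in> borel_measurable lborel"
  unfolding grid_step_def by measurable

lemma integral_grid_step:
  assumes h: "0 < h"
  shows "integral\<^sup>L lborel (grid_step h N f) = h * (\<Sum>k<N. f (real (Suc k) * h))"
proof -
  have "measure lborel {real k * h..<real (Suc k) * h} = h" for k
    using h by (simp add: measure_lborel_Ico algebra_simps)
  then show ?thesis
    unfolding grid_step_def using h
    by (subst Bochner_Integration.integral_sum)
      (auto intro!: integrable_mult_left integrable_real_indicator simp: emeasure_lborel_Ico sum_distrib_left)
qed

lemma grid_step_eq:
  assumes h: "0 < h" and s: "0 \<le> s"
  shows "grid_step h N f s = (if nat \<lfloor>s / h\<rfloor> < N then f (real (Suc (nat \<lfloor>s / h\<rfloor>)) * h) else 0)"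
proof -
  have "indicator {real k * h..<real (Suc k) * h} s * f (real (Suc k) * h) =
      (if k = nat \<lfloor>s / h\<rfloor> then f (real (Suc k) * h) else 0)" for k
    unfolding indicator_def using floor_grid_cell(3)[OF h s, of k] by (simp del: of_nat_Suc)
  then show ?thesis
    by (simp add: grid_step_def sum.delta)
qed

lemma grid_step_neg:
  assumes h: "0 < h" and s: "s < 0"
  shows "grid_step h N f s = 0"
proof -
  have "s < real k * h" for k
    using less_le_trans[OF s mult_nonneg_nonneg[OF of_nat_0_le_iff less_imp_le[OF h]]] .
  then have "s \<notin> {real k * h..<real (Suc k) * h}" for k
    by (simp add: not_le)
  then show ?thesis
    by (simp add: grid_step_def)
qed

lemma abs_grid_step_le:
  assumes h: "0 < h" "h \<le> 1" and T: "0 \<le> T" and B: "\<And>s. \<bar>f s\<bar> \<le> B"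
  shows "\<bar>grid_step h (grid_count h T) f s\<bar> \<le> B * indicator {0..T + 1} s"
proof -
  have B0: "0 \<le> B"
    using B[of 0] by linarith
  consider "s < 0" | "0 \<le> s" "nat \<lfloor>s / h\<rfloor> < grid_count h T" | "0 \<le> s" "\<not> nat \<lfloor>s / h\<rfloor> < grid_count h T"
    by linarith
  then show ?thesis
  proof cases
    case 2
    have "s < real (Suc (nat \<lfloor>s / h\<rfloor>)) * h"
      using floor_grid_cell(2)[OF h(1) 2(1)] .
    also have "\<dots> \<le> real (grid_count h T) * h"
      using 2 h by (intro mult_right_mono) auto
    also have "\<dots> < T + h"
      using grid_count_bounds(2)[OF h(1) T] .
    finally show ?thesis
      using 2 h B by (simp add: grid_step_eq)
  qed (use B0 grid_step_neg[OF h(1)] grid_step_eq[OF h(1)] in auto)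
qed

lemma grid_step_tendsto:
  assumes f: "right_locally_const f" and sT: "s \<noteq> T"
  shows "(\<lambda>m. grid_step (mesh m) (grid_count (mesh m) T) f s) \<longlonglongrightarrow> indicator {0..<T} s * f s"
proof (cases "0 \<le> s")
  case False
  then show ?thesis
    using grid_step_neg[OF mesh_pos] by simp
next
  case s: True
  have "eventually (\<lambda>m. grid_step (mesh m) (grid_count (mesh m) T) f s = indicator {0..<T} s * f s) sequentially"
  proof (cases "s < T")
    case True
    show ?thesis
      using eventually_right_grid_point_eq[OF f s]
    proof eventually_elim
      case (elim m)
      have "real (nat \<lfloor>s / mesh m\<rfloor>) * mesh m < T"
        using floor_grid_cell(1)[OF mesh_pos s, of m] True by simp
      then show ?case
        using elim True s by (simp add: grid_step_eq[OF mesh_pos s] less_grid_count_iff[OF mesh_pos])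
    qed
  next
    case False
    then have "T < s"
      using sT by simp
    then have "eventually (\<lambda>m. mesh m < s - T) sequentially"
      by (intro eventually_mesh_less) simp
    then show ?thesis
    proof eventually_elim
      case (elim m)
      then have "T \<le> real (nat \<lfloor>s / mesh m\<rfloor>) * mesh m"
        using floor_grid_cell(2)[OF mesh_pos s, of m] by (simp add: algebra_simps)
      then show ?case
        using False by (simp add: grid_step_eq[OF mesh_pos s] less_grid_count_iff[OF mesh_pos])
    qed
  qed
  then show ?thesis
    by (rule tendsto_eventually)
qed

lemma right_locally_const_measurable:
  fixes f :: "real \<Rightarrow> real"
  assumes f: "right_locally_const f"
  shows "(\<lambda>s. indicator {0..<T} s * f s) \<in> borel_measurable lborel"
proof (rule borel_measurable_LIMSEQ_real)
  let ?u = "\<lambda>m s. indicator {0..<T} s * f (real (Suc (nat \<lfloor>s / mesh m\<rfloor>)) * mesh m)"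
  have "(\<lambda>s. f (real (Suc (nat \<lfloor>s / mesh m\<rfloor>)) * mesh m)) \<in> borel_measurable lborel" for m
    by (rule measurable_compose_countable'[where f="\<lambda>n s. f (real (Suc n) * mesh m)"
          and g="\<lambda>s. nat \<lfloor>s / mesh m\<rfloor>" and I=UNIV])
      (auto simp del: of_nat_Suc)
  then show "?u m \<in> borel_measurable lborel" for m
    by measurable
  show "(\<lambda>m. ?u m s) \<longlonglongrightarrow> indicator {0..<T} s * f s" for s
  proof (cases "0 \<le> s \<and> s < T")
    case True
    then have "eventually (\<lambda>m. ?u m s = indicator {0..<T} s * f s) sequentially"
      using eventually_right_grid_point_eq[OF f, of s] by (auto elim!: eventually_mono)
    then show ?thesis
      by (rule tendsto_eventually)
  qed simp
qed

theorem riemann_sum_tendsto_integral: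
  fixes f :: "real \<Rightarrow> real"
  assumes f: "right_locally_const f" and T: "0 \<le> T" and B: "\<And>s. \<bar>f s\<bar> \<le> B"
  shows "(\<lambda>m. mesh m * (\<Sum>k<grid_count (mesh m) T. f (real (Suc k) * mesh m)))
    \<longlonglongrightarrow> (\<integral>s\<in>{0..T}. f s \<partial>lborel)"
proof -
  let ?F = "\<lambda>s. indicator {0..<T} s * f s"
  have "(\<lambda>m. integral\<^sup>L lborel (grid_step (mesh m) (grid_count (mesh m) T) f)) \<longlonglongrightarrow> integral\<^sup>L lborel ?F"
  proof (rule integral_dominated_convergence[where w="\<lambda>s. B * indicator {0..T + 1} s"])
    show "integrable lborel (\<lambda>s. B * indicator {0..T + 1} s)"
      using T by (intro integrable_mult_right integrable_real_indicator) auto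
    show "AE s in lborel. (\<lambda>m. grid_step (mesh m) (grid_count (mesh m) T) f s) \<longlonglongrightarrow> ?F s"
      using AE_lborel_singleton[of T] by eventually_elim (rule grid_step_tendsto[OF f])
    show "AE s in lborel. norm (grid_step (mesh m) (grid_count (mesh m) T) f s) \<le> B * indicator {0..T + 1} s" for m
      using abs_grid_step_le[OF mesh_pos mesh_le_one T B] by auto
  qed (use right_locally_const_measurable[OF f] in auto)
  moreover have "integral\<^sup>L lborel ?F = (\<integral>s\<in>{0..T}. f s \<partial>lborel)"
  proof -
    have F: "?F \<in> borel_measurable lborel"
      by (rule right_locally_const_measurable[OF f])
    have "(\<lambda>s. indicator {0..T} s * f s) = (\<lambda>s. indicator {T} s * f T + ?F s)"
      using T by (auto simp: indicator_def fun_eq_iff)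
    then have "(\<lambda>s. indicator {0..T} s * f s) \<in> borel_measurable lborel"
      using F by simp
    moreover have "AE s in lborel. indicator {0..T} s * f s = ?F s"
      using AE_lborel_singleton[of T] by eventually_elim (auto simp: indicator_def)
    ultimately show ?thesis
      unfolding set_lebesgue_integral_def
      using F by (intro integral_cong_AE[symmetric]) auto
  qed
  ultimately show ?thesis
    by (simp add: integral_grid_step[OF mesh_pos])
qed

section \<open>Dynkin's formula\<close>

locale ctmc_stopping = ctmc_process M Q X
  for M :: "'a measure" and Q :: "'s::finite \<Rightarrow> 's \<Rightarrow> real" and X +
  fixes \<tau> :: "'a \<Rightarrow> real"
  assumes stopping_time: "stopping_time (nat_filtration M X) \<tau>"
    and \<tau>_nonneg: "\<And>\<omega>. \<omega> \<in> space M \<Longrightarrow> 0 \<le> \<tau> \<omega>"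
    and integrable_\<tau>: "integrable M \<tau>"
begin

definition running :: "real \<Rightarrow> nat \<Rightarrow> 'a set" where
  "running h k = {\<omega>\<in>space M. real k * h < \<tau> \<omega>}"

lemma stopped_by_past: "{\<omega>\<in>space M. \<tau> \<omega> \<le> t} \<in> sigma_sets (space M) (past_cylinders t)"
proof -
  have "Measurable.pred (nat_filtration M X t) (\<lambda>\<omega>. \<tau> \<omega> \<le> t)"
    using stopping_time by (simp add: stopping_time_def)
  then show ?thesis
    using nat_filtration_subset_past_cylinders by (auto simp: Measurable.pred_def space_nat_filtration)
qed

lemma \<tau>_measurable [measurable]: "\<tau> \<in> borel_measurable M"
  using stopped_by_past sigma_past_cylinders_subset by (auto simp: borel_measurable_iff_le)

lemma running_past: "running h k \<in> sigma_sets (space M) (past_cylinders (real k * h))"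
proof -
  have "running h k = space M - {\<omega>\<in>space M. \<tau> \<omega> \<le> real k * h}"
    by (auto simp: running_def)
  then show ?thesis
    using stopped_by_past by (simp add: sigma_sets.Compl)
qed

lemma running_sets [measurable]: "running h k \<in> events"
  using running_past sigma_past_cylinders_subset by blast

lemma mem_running_iff: "0 < h \<Longrightarrow> \<omega> \<in> space M \<Longrightarrow> \<omega> \<in> running h k \<longleftrightarrow> k < grid_count h (\<tau> \<omega>)"
  by (simp add: running_def less_grid_count_iff)

lemma
  assumes h: "0 < h"
  shows summable_prob_running: "summable (\<lambda>k. prob (running h k))"
    and suminf_prob_running_le: "(\<Sum>k. prob (running h k)) \<le> expectation \<tau> / h + 1"
proof -
  have count: "(\<Sum>k<K. indicator (running h k) \<omega>) \<le> \<tau> \<omega> / h + 1" if \<omega>: "\<omega> \<in> space M" for K \<omega>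
  proof -
    have "(\<Sum>k<K. indicator (running h k) \<omega> :: real) = real (card ({..<K} \<inter> {..<grid_count h (\<tau> \<omega>)}))"
      using mem_running_iff[OF h \<omega>] by (simp add: indicator_def sum.If_cases Int_def)
    also have "\<dots> \<le> real (grid_count h (\<tau> \<omega>))"
      using card_mono[of "{..<grid_count h (\<tau> \<omega>)}" "{..<K} \<inter> {..<grid_count h (\<tau> \<omega>)}"] by simp
    also have "\<dots> \<le> \<tau> \<omega> / h + 1"
      using grid_count_bounds(2)[OF h \<tau>_nonneg[OF \<omega>]] h by (simp add: field_simps)
    finally show ?thesis .
  qed
  have partial: "(\<Sum>k<K. prob (running h k)) \<le> expectation \<tau> / h + 1" for K
  proof -
    have "(\<Sum>k<K. prob (running h k)) = (\<integral>\<omega>. (\<Sum>k<K. indicator (running h k) \<omega>) \<partial>M)"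
      by (subst Bochner_Integration.integral_sum) (auto simp: emeasure_finite top.not_eq_extremum[symmetric])
    also have "\<dots> \<le> (\<integral>\<omega>. \<tau> \<omega> / h + 1 \<partial>M)"
      using integrable_\<tau> count
      by (intro integral_mono) (auto simp: emeasure_finite top.not_eq_extremum[symmetric])
    also have "\<dots> = expectation \<tau> / h + 1"
      using integrable_\<tau> by (simp add: prob_space)
    finally show ?thesis .
  qed
  show "summable (\<lambda>k. prob (running h k))"
    by (rule summableI_nonneg_bounded[OF _ partial]) simp
  then show "(\<Sum>k. prob (running h k)) \<le> expectation \<tau> / h + 1"
    by (rule suminf_le_const[OF _ partial])
qed

lemma
  fixes \<psi> :: "nat \<Rightarrow> 'a \<Rightarrow> real"
  assumes h: "0 < h" and meas: "\<And>k. \<psi> k \<in> borel_measurable M"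
    and bound: "\<And>k \<omega>. \<omega> \<in> space M \<Longrightarrow> \<bar>\<psi> k \<omega>\<bar> \<le> B"
  shows integrable_suminf_running: "integrable M (\<lambda>\<omega>. \<Sum>k. indicator (running h k) \<omega> * \<psi> k \<omega>)"
    and integral_suminf_running: "(\<integral>\<omega>. (\<Sum>k. indicator (running h k) \<omega> * \<psi> k \<omega>) \<partial>M) =
      (\<Sum>k. \<integral>\<omega>. indicator (running h k) \<omega> * \<psi> k \<omega> \<partial>M)"
    and summable_integral_running: "summable (\<lambda>k. \<integral>\<omega>. indicator (running h k) \<omega> * \<psi> k \<omega> \<partial>M)"
proof -
  have B: "0 \<le> B"
  proof -
    obtain \<omega> where "\<omega> \<in> space M"
      using not_empty by blast
    then show ?thesis
      using bound[of \<omega> 0] by linarith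
  qed
  have int: "integrable M (\<lambda>\<omega>. indicator (running h k) \<omega> * \<psi> k \<omega>)" for k
    using bound B meas by (intro integrable_const_bound[where B=B]) (auto simp: indicator_def)
  have summ: "AE \<omega> in M. summable (\<lambda>k. norm (indicator (running h k) \<omega> * \<psi> k \<omega>))"
  proof (rule AE_I2)
    fix \<omega> assume \<omega>: "\<omega> \<in> space M"
    show "summable (\<lambda>k. norm (indicator (running h k) \<omega> * \<psi> k \<omega>))"
      by (rule summable_finite[of "{..<grid_count h (\<tau> \<omega>)}"])
        (use mem_running_iff[OF h \<omega>] in \<open>auto simp: indicator_def\<close>)
  qed
  have "(\<integral>\<omega>. norm (indicator (running h k) \<omega> * \<psi> k \<omega>) \<partial>M) \<le> B * prob (running h k)" for k
  proof -
    have "(\<integral>\<omega>. norm (indicator (running h k) \<omega> * \<psi> k \<omega>) \<partial>M) \<le> (\<integral>\<omega>. B * indicator (running h k) \<omega> \<partial>M)"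
      using bound by (intro integral_mono integrable_norm int integrable_mult_right integrable_real_indicator)
        (auto simp: indicator_def emeasure_finite top.not_eq_extremum[symmetric])
    then show ?thesis
      by simp
  qed
  then have sums: "summable (\<lambda>k. \<integral>\<omega>. norm (indicator (running h k) \<omega> * \<psi> k \<omega>) \<partial>M)"
    by (intro summable_comparison_test[OF _ summable_mult[OF summable_prob_running[OF h], of B]]) auto
  show "integrable M (\<lambda>\<omega>. \<Sum>k. indicator (running h k) \<omega> * \<psi> k \<omega>)"
    by (rule integrable_suminf[OF int summ sums])
  show "(\<integral>\<omega>. (\<Sum>k. indicator (running h k) \<omega> * \<psi> k \<omega>) \<partial>M) =
      (\<Sum>k. \<integral>\<omega>. indicator (running h k) \<omega> * \<psi> k \<omega> \<partial>M)"
    by (rule integral_suminf[OF int summ sums])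
  show "summable (\<lambda>k. \<integral>\<omega>. indicator (running h k) \<omega> * \<psi> k \<omega> \<partial>M)"
    by (rule summable_integral[OF int summ sums])
qed

lemma suminf_running_eq_sum:
  fixes f :: "nat \<Rightarrow> real"
  assumes h: "0 < h" and \<omega>: "\<omega> \<in> space M"
  shows "(\<Sum>k. indicator (running h k) \<omega> * f k) = (\<Sum>k<grid_count h (\<tau> \<omega>). f k)"
proof -
  have "(\<Sum>k. indicator (running h k) \<omega> * f k) = (\<Sum>k<grid_count h (\<tau> \<omega>). indicator (running h k) \<omega> * f k)"
    by (rule suminf_finite) (use mem_running_iff[OF h \<omega>] in \<open>auto simp: indicator_def\<close>)
  also have "\<dots> = (\<Sum>k<grid_count h (\<tau> \<omega>). f k)"
    using mem_running_iff[OF h \<omega>] by (intro sum.cong) (auto simp: indicator_def)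
  finally show ?thesis .
qed

definition grid_stopped :: "real \<Rightarrow> ('s \<Rightarrow> real) \<Rightarrow> 'a \<Rightarrow> real" where
  "grid_stopped h \<phi> \<omega> = \<phi> (X (real (grid_count h (\<tau> \<omega>)) * h) \<omega>)"

text \<open>A series over all grid indices rather than a sum up to the random index
  \<open>grid_count h (\<tau> \<omega>)\<close>, so that expectations can be taken termwise.\<close>
definition grid_occupation :: "real \<Rightarrow> ('s \<Rightarrow> real) \<Rightarrow> 'a \<Rightarrow> real" where
  "grid_occupation h \<psi> \<omega> = (\<Sum>k. indicator (running h k) \<omega> * \<psi> (X (real (Suc k) * h) \<omega>)) * h"

definition occupation :: "('s \<Rightarrow> real) \<Rightarrow> 'a \<Rightarrow> real" where
  "occupation \<psi> \<omega> = (\<integral>s\<in>{0..\<tau> \<omega>}. \<psi> (X s \<omega>) \<partial>lborel)"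

lemma grid_stopped_measurable: "0 \<le> h \<Longrightarrow> grid_stopped h \<phi> \<in> borel_measurable M"
  unfolding grid_stopped_def grid_count_def
  by (rule measurable_compose_countable'[where f="\<lambda>n \<omega>. \<phi> (X (real n * h) \<omega>)" and I=UNIV]) auto

lemma grid_stopped_tendsto:
  assumes \<omega>: "\<omega> \<in> space M"
  shows "(\<lambda>m. grid_stopped (mesh m) \<phi> \<omega>) \<longlonglongrightarrow> \<phi> (X (\<tau> \<omega>) \<omega>)"
proof -
  obtain e where e: "e > 0" "\<And>s. \<tau> \<omega> \<le> s \<and> s < \<tau> \<omega> + e \<longrightarrow> X s \<omega> = X (\<tau> \<omega>) \<omega>"
    using path_right_locally_const[OF \<omega> \<tau>_nonneg[OF \<omega>]] by blast
  have "eventually (\<lambda>m. grid_stopped (mesh m) \<phi> \<omega> = \<phi> (X (\<tau> \<omega>) \<omega>)) sequentially"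
    using eventually_mesh_less[OF e(1)]
  proof eventually_elim
    case (elim m)
    then have "\<tau> \<omega> \<le> real (grid_count (mesh m) (\<tau> \<omega>)) * mesh m"
      and "real (grid_count (mesh m) (\<tau> \<omega>)) * mesh m < \<tau> \<omega> + e"
      using grid_count_bounds[OF mesh_pos \<tau>_nonneg[OF \<omega>], of m] by linarith+
    then have "X (real (grid_count (mesh m) (\<tau> \<omega>)) * mesh m) \<omega> = X (\<tau> \<omega>) \<omega>"
      using e(2) by blast
    then show ?case
      by (simp add: grid_stopped_def)
  qed
  then show ?thesis
    by (rule tendsto_eventually)
qed

lemma stopped_state_fun_measurable: "(\<lambda>\<omega>. \<phi> (X (\<tau> \<omega>) \<omega>) :: real) \<in> borel_measurable M"
  by (rule borel_measurable_LIMSEQ_real[OF grid_stopped_tendsto grid_stopped_measurable])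
    (auto intro: less_imp_le mesh_pos)

lemma stopped_state_measurable: "(\<lambda>\<omega>. X (\<tau> \<omega>) \<omega>) \<in> measurable M (count_space UNIV)"
proof (subst measurable_count_space_eq2_countable, safe)
  fix a :: 's
  have "(\<lambda>\<omega>. if X (\<tau> \<omega>) \<omega> = a then 1 else 0 :: real) -` {1} \<inter> space M \<in> events"
    by (rule measurable_sets[OF stopped_state_fun_measurable]) auto
  moreover have "(\<lambda>\<omega>. if X (\<tau> \<omega>) \<omega> = a then 1 else 0 :: real) -` {1} = (\<lambda>\<omega>. X (\<tau> \<omega>) \<omega>) -` {a}"
    by (auto split: if_splits)
  ultimately show "(\<lambda>\<omega>. X (\<tau> \<omega>) \<omega>) -` {a} \<inter> space M \<in> events"
    by simp
qed auto

lemma grid_occupation_eq: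
  "0 < h \<Longrightarrow> \<omega> \<in> space M \<Longrightarrow>
    grid_occupation h \<psi> \<omega> = h * (\<Sum>k<grid_count h (\<tau> \<omega>). \<psi> (X (real (Suc k) * h) \<omega>))"
  by (simp add: grid_occupation_def suminf_running_eq_sum mult.commute)

lemma grid_occupation_measurable:
  assumes h: "0 < h"
  shows "grid_occupation h \<psi> \<in> borel_measurable M"
proof -
  have "integrable M (\<lambda>\<omega>. \<Sum>k. indicator (running h k) \<omega> * \<psi> (X (real (Suc k) * h) \<omega>))"
    using h by (intro integrable_suminf_running[where B="l1_norm \<psi>"]) (auto simp: abs_le_l1_norm)
  then show ?thesis
    unfolding grid_occupation_def by (intro borel_measurable_times borel_measurable_integrable) auto
qed

lemma grid_occupation_tendsto:
  assumes \<omega>: "\<omega> \<in> space M"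
  shows "(\<lambda>m. grid_occupation (mesh m) \<psi> \<omega>) \<longlonglongrightarrow> occupation \<psi> \<omega>"
proof -
  have "right_locally_const (\<lambda>s. X s \<omega>)"
    using path_right_locally_const[OF \<omega>] unfolding right_locally_const_def by blast
  then have "right_locally_const (\<lambda>s. \<psi> (X s \<omega>))"
    by (rule right_locally_const_comp)
  from riemann_sum_tendsto_integral[OF this \<tau>_nonneg[OF \<omega>] abs_le_l1_norm]
  show ?thesis
    unfolding grid_occupation_eq[OF mesh_pos \<omega>] occupation_def .
qed

lemma abs_grid_occupation_le:
  assumes \<omega>: "\<omega> \<in> space M"
  shows "\<bar>grid_occupation (mesh m) \<psi> \<omega>\<bar> \<le> l1_norm \<psi> * (\<tau> \<omega> + 1)"
proof -
  have "\<bar>\<Sum>k<grid_count (mesh m) (\<tau> \<omega>). \<psi> (X (real (Suc k) * mesh m) \<omega>)\<bar> \<le>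
      (\<Sum>k<grid_count (mesh m) (\<tau> \<omega>). l1_norm \<psi>)"
    by (rule order_trans[OF sum_abs sum_mono]) (rule abs_le_l1_norm)
  then have "\<bar>grid_occupation (mesh m) \<psi> \<omega>\<bar> \<le> mesh m * (\<Sum>k<grid_count (mesh m) (\<tau> \<omega>). l1_norm \<psi>)"
    unfolding grid_occupation_eq[OF mesh_pos \<omega>] using mesh_pos[of m]
    by (simp add: abs_mult mult_left_mono del: sum_constant)
  also have "\<dots> = l1_norm \<psi> * (real (grid_count (mesh m) (\<tau> \<omega>)) * mesh m)"
    by simp
  also have "\<dots> \<le> l1_norm \<psi> * (\<tau> \<omega> + 1)"
    using grid_count_bounds(2)[OF mesh_pos \<tau>_nonneg[OF \<omega>], of m] mesh_le_one[of m]
    by (intro mult_left_mono) (auto simp: l1_norm_nonneg)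
  finally show ?thesis .
qed

lemma
  shows integrable_occupation: "integrable M (occupation \<psi>)"
    and expectation_grid_occupation_tendsto:
      "(\<lambda>m. expectation (grid_occupation (mesh m) \<psi>)) \<longlonglongrightarrow> expectation (occupation \<psi>)"
proof -
  have meas: "occupation \<psi> \<in> borel_measurable M"
    by (rule borel_measurable_LIMSEQ_real[OF grid_occupation_tendsto grid_occupation_measurable[OF mesh_pos]])
  have w: "integrable M (\<lambda>\<omega>. l1_norm \<psi> * (\<tau> \<omega> + 1))"
    using integrable_\<tau> by simp
  have lim: "AE \<omega> in M. (\<lambda>m. grid_occupation (mesh m) \<psi> \<omega>) \<longlonglongrightarrow> occupation \<psi> \<omega>"
    by (intro AE_I2 grid_occupation_tendsto)
  have bound: "AE \<omega> in M. norm (grid_occupation (mesh m) \<psi> \<omega>) \<le> l1_norm \<psi> * (\<tau> \<omega> + 1)" for m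
    by (intro AE_I2) (simp add: abs_grid_occupation_le)
  show "integrable M (occupation \<psi>)"
    by (rule integrable_dominated_convergence[OF meas grid_occupation_measurable[OF mesh_pos] w lim bound])
  show "(\<lambda>m. expectation (grid_occupation (mesh m) \<psi>)) \<longlonglongrightarrow> expectation (occupation \<psi>)"
    by (rule integral_dominated_convergence[OF meas grid_occupation_measurable[OF mesh_pos] w lim bound])
qed


lemma grid_stopped_telescope:
  assumes h: "0 < h" and \<omega>: "\<omega> \<in> space M"
  shows "grid_stopped h \<phi> \<omega> - \<phi> (X 0 \<omega>) =
    (\<Sum>k. indicator (running h k) \<omega> * (\<phi> (X (real (Suc k) * h) \<omega>) - \<phi> (X (real k * h) \<omega>)))"
  using sum_lessThan_telescope[where f="\<lambda>n. \<phi> (X (real n * h) \<omega>)"]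
  by (simp add: suminf_running_eq_sum[OF h \<omega>] grid_stopped_def)

definition grid_increment :: "real \<Rightarrow> ('s \<Rightarrow> real) \<Rightarrow> nat \<Rightarrow> real" where
  "grid_increment h \<phi> k =
    (\<integral>\<omega>. indicator (running h k) \<omega> * (\<phi> (X (real (Suc k) * h) \<omega>) - \<phi> (X (real k * h) \<omega>)) \<partial>M)"

definition grid_drift :: "real \<Rightarrow> ('s \<Rightarrow> real) \<Rightarrow> nat \<Rightarrow> real" where
  "grid_drift h \<psi> k = (\<integral>\<omega>. indicator (running h k) \<omega> * \<psi> (X (real (Suc k) * h) \<omega>) \<partial>M)"

lemma grid_increment_eq:
  assumes h: "0 \<le> h"
  shows "grid_increment h \<phi> k = state_expectation (running h k) (real k * h) (\<lambda>x. trans_op Q h \<phi> x - \<phi> x)"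
proof -
  let ?A = "running h k" and ?t = "real k * h"
  have t: "0 \<le> ?t"
    using h by simp
  have "grid_increment h \<phi> k =
      (\<integral>\<omega>. indicator ?A \<omega> * \<phi> (X (?t + h) \<omega>) - indicator ?A \<omega> * \<phi> (X ?t \<omega>) \<partial>M)"
    by (simp add: grid_increment_def algebra_simps)
  also have "\<dots> = (\<integral>\<omega>. indicator ?A \<omega> * \<phi> (X (?t + h) \<omega>) \<partial>M) - (\<integral>\<omega>. indicator ?A \<omega> * \<phi> (X ?t \<omega>) \<partial>M)"
    using h t by (intro Bochner_Integration.integral_diff integrable_indicator_state_fun running_sets) auto
  also have "\<dots> = state_expectation ?A ?t (trans_op Q h \<phi>) - state_expectation ?A ?t \<phi>"
    unfolding integral_indicator_markov[OF t h running_past] integral_indicator_state_fun[OF running_sets t] ..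
  also have "\<dots> = state_expectation ?A ?t (\<lambda>x. trans_op Q h \<phi> x - \<phi> x)"
    by (simp add: state_expectation_def sum_subtractf left_diff_distrib)
  finally show ?thesis .
qed

lemma grid_drift_eq:
  assumes h: "0 \<le> h"
  shows "grid_drift h \<psi> k = state_expectation (running h k) (real k * h) (trans_op Q h \<psi>)"
proof -
  have "real (Suc k) * h = real k * h + h"
    by (simp add: algebra_simps)
  then show ?thesis
    unfolding grid_drift_def using integral_indicator_markov[OF _ h running_past] h by simp
qed

definition dynkin_const :: "('s \<Rightarrow> real) \<Rightarrow> real" where
  "dynkin_const \<phi> = exp (entry_norm Q) * l1_norm \<phi> + (entry_norm Q + exp (entry_norm Q)) * l1_norm (gen_op Q \<phi>)"

lemma dynkin_const_nonneg: "0 \<le> dynkin_const \<phi>"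
  by (simp add: dynkin_const_def l1_norm_nonneg entry_norm_nonneg)

text \<open>Both terms are expectations at time \<open>k h\<close>, on an event known at that time, of
  \<open>P\<^sub>h \<phi> - \<phi> \<approx> h Q \<phi>\<close> and of \<open>P\<^sub>h (Q \<phi>) \<approx> Q \<phi>\<close>.\<close>
lemma grid_increment_estimate:
  assumes h: "0 < h" "h \<le> 1"
  shows "\<bar>grid_increment h \<phi> k - h * grid_drift h (gen_op Q \<phi>) k\<bar> \<le> dynkin_const \<phi> * h\<^sup>2 * prob (running h k)"
proof -
  let ?A = "running h k" and ?t = "real k * h"
  let ?E = "state_expectation ?A ?t" and ?g = "gen_op Q \<phi>"
  have t: "0 \<le> ?t"
    using h by simp
  have split: "grid_increment h \<phi> k - h * grid_drift h ?g k =
      ?E (\<lambda>x. trans_op Q h \<phi> x - \<phi> x - h * ?g x) + h * ?E (\<lambda>x. ?g x - trans_op Q h ?g x)"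
    using h by (simp add: grid_increment_eq grid_drift_eq state_expectation_def algebra_simps sum.distrib
        sum_subtractf sum_distrib_left)
  have second_order: "\<bar>?E (\<lambda>x. trans_op Q h \<phi> x - \<phi> x - h * ?g x)\<bar> \<le>
      h\<^sup>2 * (exp (entry_norm Q) * l1_norm \<phi>) * prob ?A"
    by (rule abs_state_expectation_le[OF running_sets t trans_op_second_order]) (use h in auto)
  have lipschitz: "\<bar>?E (\<lambda>x. ?g x - trans_op Q h ?g x)\<bar> \<le>
      h * ((entry_norm Q + exp (entry_norm Q)) * l1_norm ?g) * prob ?A"
    using trans_op_lipschitz[of h Q ?g] h
    by (intro abs_state_expectation_le[OF running_sets t]) (simp add: abs_minus_commute)
  have "\<bar>?E (\<lambda>x. trans_op Q h \<phi> x - \<phi> x - h * ?g x) + h * ?E (\<lambda>x. ?g x - trans_op Q h ?g x)\<bar> \<le>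
      h\<^sup>2 * (exp (entry_norm Q) * l1_norm \<phi>) * prob ?A +
      h * (h * ((entry_norm Q + exp (entry_norm Q)) * l1_norm ?g) * prob ?A)"
    using h second_order lipschitz
    by (intro order_trans[OF abs_triangle_ineq] add_mono) (auto simp: abs_mult mult_left_mono)
  also have "\<dots> = dynkin_const \<phi> * h\<^sup>2 * prob ?A"
    by (simp add: dynkin_const_def power2_eq_square algebra_simps)
  finally show ?thesis
    unfolding split .
qed

lemma
  assumes h: "0 < h"
  shows summable_grid_increment: "summable (grid_increment h \<phi>)"
    and expectation_grid_stopped_diff:
      "expectation (grid_stopped h \<phi>) - expectation (\<lambda>\<omega>. \<phi> (X 0 \<omega>)) = (\<Sum>k. grid_increment h \<phi> k)"
proof -
  have bound: "\<bar>\<phi> (X (real (Suc k) * h) \<omega>) - \<phi> (X (real k * h) \<omega>)\<bar> \<le> 2 * l1_norm \<phi>" for k \<omega>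
    using abs_le_l1_norm[of \<phi> "X (real (Suc k) * h) \<omega>"] abs_le_l1_norm[of \<phi> "X (real k * h) \<omega>"] by simp
  show "summable (grid_increment h \<phi>)"
    unfolding grid_increment_def using h bound
    by (intro summable_integral_running[where B="2 * l1_norm \<phi>"]) simp_all
  have "expectation (grid_stopped h \<phi>) - expectation (\<lambda>\<omega>. \<phi> (X 0 \<omega>)) =
      expectation (\<lambda>\<omega>. grid_stopped h \<phi> \<omega> - \<phi> (X 0 \<omega>))"
    using h by (intro Bochner_Integration.integral_diff[symmetric] integrable_const_bound[where B="l1_norm \<phi>"])
      (auto simp: grid_stopped_def abs_le_l1_norm grid_stopped_measurable)
  also have "\<dots> = expectation (\<lambda>\<omega>. \<Sum>k. indicator (running h k) \<omega> *
      (\<phi> (X (real (Suc k) * h) \<omega>) - \<phi> (X (real k * h) \<omega>)))"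
    by (rule Bochner_Integration.integral_cong[OF refl grid_stopped_telescope[OF h]])
  also have "\<dots> = (\<Sum>k. grid_increment h \<phi> k)"
    unfolding grid_increment_def using h bound
    by (intro integral_suminf_running[where B="2 * l1_norm \<phi>"]) simp_all
  finally show "expectation (grid_stopped h \<phi>) - expectation (\<lambda>\<omega>. \<phi> (X 0 \<omega>)) = (\<Sum>k. grid_increment h \<phi> k)" .
qed

lemma
  assumes h: "0 < h"
  shows summable_grid_drift: "summable (grid_drift h \<psi>)"
    and expectation_grid_occupation: "expectation (grid_occupation h \<psi>) = h * (\<Sum>k. grid_drift h \<psi> k)"
proof -
  show "summable (grid_drift h \<psi>)"
    unfolding grid_drift_def using h abs_le_l1_norm[of \<psi>]
    by (intro summable_integral_running[where B="l1_norm \<psi>"]) simp_all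
  have "(\<integral>\<omega>. (\<Sum>k. indicator (running h k) \<omega> * \<psi> (X (real (Suc k) * h) \<omega>)) \<partial>M) = (\<Sum>k. grid_drift h \<psi> k)"
    unfolding grid_drift_def using h abs_le_l1_norm[of \<psi>]
    by (intro integral_suminf_running[where B="l1_norm \<psi>"]) simp_all
  then show "expectation (grid_occupation h \<psi>) = h * (\<Sum>k. grid_drift h \<psi> k)"
    unfolding grid_occupation_def integral_mult_left_zero by simp
qed

lemma dynkin_discrete:
  assumes h: "0 < h" "h \<le> 1"
  shows "\<bar>expectation (grid_stopped h \<phi>) - expectation (\<lambda>\<omega>. \<phi> (X 0 \<omega>))
      - expectation (grid_occupation h (gen_op Q \<phi>))\<bar> \<le> dynkin_const \<phi> * h * (expectation \<tau> + 1)"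
proof -
  let ?C = "dynkin_const \<phi>" and ?g = "gen_op Q \<phi>"
  have "expectation (grid_stopped h \<phi>) - expectation (\<lambda>\<omega>. \<phi> (X 0 \<omega>)) - expectation (grid_occupation h ?g) =
      (\<Sum>k. grid_increment h \<phi> k - h * grid_drift h ?g k)"
    using suminf_diff[OF summable_grid_increment[OF h(1)] summable_mult[OF summable_grid_drift[OF h(1)], of h]]
      suminf_mult[OF summable_grid_drift[OF h(1)], of h]
    by (simp add: expectation_grid_stopped_diff[OF h(1)] expectation_grid_occupation[OF h(1)])
  also have "\<bar>\<dots>\<bar> \<le> (\<Sum>k. ?C * h\<^sup>2 * prob (running h k))"
  proof -
    have "norm (grid_increment h \<phi> k - h * grid_drift h ?g k) \<le> ?C * h\<^sup>2 * prob (running h k)" for k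
      using grid_increment_estimate[OF h] by simp
    from norm_suminf_le[OF this summable_mult[OF summable_prob_running[OF h(1)], of "?C * h\<^sup>2"]]
    show ?thesis
      by simp
  qed
  also have "\<dots> \<le> ?C * h\<^sup>2 * (expectation \<tau> / h + 1)"
    using suminf_prob_running_le[OF h(1)] dynkin_const_nonneg[of \<phi>]
    by (simp add: suminf_mult[OF summable_prob_running[OF h(1)]] mult_left_mono)
  also have "\<dots> = ?C * h * (expectation \<tau> + h)"
    using h by (simp add: power2_eq_square field_simps)
  also have "\<dots> \<le> ?C * h * (expectation \<tau> + 1)"
    using h dynkin_const_nonneg[of \<phi>] by (intro mult_left_mono) auto
  finally show ?thesis .
qed

theorem dynkin_formula:
  "expectation (\<lambda>\<omega>. \<phi> (X (\<tau> \<omega>) \<omega>)) - expectation (\<lambda>\<omega>. \<phi> (X 0 \<omega>)) =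
    expectation (occupation (gen_op Q \<phi>))"
proof -
  define d where "d m = expectation (grid_stopped (mesh m) \<phi>) - expectation (\<lambda>\<omega>. \<phi> (X 0 \<omega>))
      - expectation (grid_occupation (mesh m) (gen_op Q \<phi>))" for m
  have "(\<lambda>m. expectation (grid_stopped (mesh m) \<phi>)) \<longlonglongrightarrow> expectation (\<lambda>\<omega>. \<phi> (X (\<tau> \<omega>) \<omega>))"
  proof (rule integral_dominated_convergence[where w="\<lambda>_. l1_norm \<phi>"])
    show "grid_stopped (mesh m) \<phi> \<in> borel_measurable M" for m
      by (rule grid_stopped_measurable[OF less_imp_le[OF mesh_pos]])
    show "AE \<omega> in M. (\<lambda>m. grid_stopped (mesh m) \<phi> \<omega>) \<longlonglongrightarrow> \<phi> (X (\<tau> \<omega>) \<omega>)"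
      by (intro AE_I2 grid_stopped_tendsto)
    show "AE \<omega> in M. norm (grid_stopped (mesh m) \<phi> \<omega>) \<le> l1_norm \<phi>" for m
      by (simp add: grid_stopped_def abs_le_l1_norm)
  qed (simp_all add: stopped_state_fun_measurable)
  then have "d \<longlonglongrightarrow> expectation (\<lambda>\<omega>. \<phi> (X (\<tau> \<omega>) \<omega>)) - expectation (\<lambda>\<omega>. \<phi> (X 0 \<omega>))
      - expectation (occupation (gen_op Q \<phi>))"
    unfolding d_def by (intro tendsto_diff tendsto_const expectation_grid_occupation_tendsto)
  moreover have "d \<longlonglongrightarrow> 0"
  proof (rule Lim_null_comparison)
    show "eventually (\<lambda>m. norm (d m) \<le> dynkin_const \<phi> * (expectation \<tau> + 1) * mesh m) sequentially"
      using dynkin_discrete[OF mesh_pos mesh_le_one] by (simp add: d_def mult_ac)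
    show "(\<lambda>m. dynkin_const \<phi> * (expectation \<tau> + 1) * mesh m) \<longlonglongrightarrow> 0"
      using tendsto_mult_right_zero[OF mesh_tendsto_zero] by blast
  qed
  ultimately show ?thesis
    using LIMSEQ_unique by fastforce
qed

lemma occupation_sum:
  assumes \<omega>: "\<omega> \<in> space M"
  shows "occupation (\<lambda>x. \<Sum>w\<in>W. c w * \<psi> w x) \<omega> = (\<Sum>w\<in>W. c w * occupation (\<psi> w) \<omega>)"
proof -
  have "grid_occupation (mesh m) (\<lambda>x. \<Sum>w\<in>W. c w * \<psi> w x) \<omega> =
      (\<Sum>w\<in>W. c w * grid_occupation (mesh m) (\<psi> w) \<omega>)" for m
    by (simp add: grid_occupation_eq[OF mesh_pos \<omega>] sum_distrib_left mult_ac sum.swap[of _ W])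
  then have "(\<lambda>m. grid_occupation (mesh m) (\<lambda>x. \<Sum>w\<in>W. c w * \<psi> w x) \<omega>) \<longlonglongrightarrow>
      (\<Sum>w\<in>W. c w * occupation (\<psi> w) \<omega>)"
    by (simp only:) (intro tendsto_sum tendsto_mult tendsto_const grid_occupation_tendsto[OF \<omega>])
  then show ?thesis
    using LIMSEQ_unique[OF grid_occupation_tendsto[OF \<omega>]] by blast
qed

lemma occupation_const_one: "\<omega> \<in> space M \<Longrightarrow> occupation (\<lambda>_. 1) \<omega> = \<tau> \<omega>"
  using \<tau>_nonneg[of \<omega>] by (simp add: occupation_def set_lebesgue_integral_def)


section \<open>The occupation measure of a stopped chain\<close>

definition lumped_occupation :: "('s \<Rightarrow> 'v) \<Rightarrow> 'v \<Rightarrow> real" where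
  "lumped_occupation p w = expectation (occupation (\<lambda>x. if p x = w then 1 else 0))"

lemma expectation_occupation_lumped:
  fixes p :: "'s \<Rightarrow> 'v::finite"
  shows "expectation (occupation (\<lambda>x. f (p x))) = (\<Sum>w\<in>UNIV. f w * lumped_occupation p w)"
proof -
  have "(\<lambda>x. f (p x)) = (\<lambda>x. \<Sum>w\<in>UNIV. f w * (if p x = w then 1 else 0))"
    by (simp add: if_distrib cong: if_cong)
  then have "expectation (occupation (\<lambda>x. f (p x))) =
      expectation (\<lambda>\<omega>. \<Sum>w\<in>UNIV. f w * occupation (\<lambda>x. if p x = w then 1 else 0) \<omega>)"
    by (simp add: occupation_sum cong: Bochner_Integration.integral_cong)
  also have "\<dots> = (\<Sum>w\<in>UNIV. f w * lumped_occupation p w)"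
    by (simp add: lumped_occupation_def integrable_occupation)
  finally show ?thesis .
qed

lemma sum_lumped_occupation:
  fixes p :: "'s \<Rightarrow> 'v::finite"
  shows "(\<Sum>w\<in>UNIV. lumped_occupation p w) = expectation \<tau>"
  using expectation_occupation_lumped[of "\<lambda>_. 1" p]
  by (simp add: occupation_const_one cong: Bochner_Integration.integral_cong)

text \<open>Dynkin's formula for the indicator of \<open>p x = y\<close>, whose left side vanishes because
  \<open>p (X 0)\<close> and \<open>p (X \<tau>)\<close> have the same law.\<close>
theorem lumped_occupation_invariant:
  fixes p :: "'s \<Rightarrow> 'v::finite" and Q' :: "'v \<Rightarrow> 'v \<Rightarrow> real"
  assumes lump: "\<And>f x. gen_op Q (\<lambda>x. f (p x)) x = gen_op Q' f (p x)"
    and same_law: "distr M (count_space UNIV) (\<lambda>\<omega>. p (X 0 \<omega>)) =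
      distr M (count_space UNIV) (\<lambda>\<omega>. p (X (\<tau> \<omega>) \<omega>))"
  shows "invariant_measure Q' (lumped_occupation p)"
  unfolding invariant_measure_def
proof
  fix y :: 'v
  define f where "f w = (if w = y then 1 else 0 :: real)" for w
  have "(\<integral>\<omega>. f (p (X (\<tau> \<omega>) \<omega>)) \<partial>M) = (\<integral>\<omega>. f (p (X 0 \<omega>)) \<partial>M)"
    using integral_distr[of "\<lambda>\<omega>. p (X (\<tau> \<omega>) \<omega>)" M "count_space UNIV" f]
      integral_distr[of "\<lambda>\<omega>. p (X 0 \<omega>)" M "count_space UNIV" f]
      stopped_state_measurable X_measurable[of 0] same_law
    by simp
  then have "0 = expectation (occupation (gen_op Q (\<lambda>x. f (p x))))"
    using dynkin_formula[of "\<lambda>x. f (p x)"] by simp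
  also have "gen_op Q (\<lambda>x. f (p x)) = (\<lambda>x. gen_op Q' f (p x))"
    using lump by (rule ext)
  also have "expectation (occupation (\<lambda>x. gen_op Q' f (p x))) = (\<Sum>w\<in>UNIV. Q' w y * lumped_occupation p w)"
  proof -
    have "gen_op Q' f = (\<lambda>w. Q' w y)"
      by (rule ext) (simp add: gen_op_def f_def if_distrib cong: if_cong)
    then show ?thesis
      using expectation_occupation_lumped[of "\<lambda>w. Q' w y" p] by simp
  qed
  finally show "(\<Sum>w\<in>UNIV. lumped_occupation p w * Q' w y) = 0"
    by (simp add: mult.commute)
qed

end

theorem lemma4p2:
  fixes M :: "'a measure"
    and QU :: "'u::finite \<Rightarrow> 'u \<Rightarrow> real" and QV :: "'v::finite \<Rightarrow> 'v \<Rightarrow> real"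
    and X :: "real \<Rightarrow> 'a \<Rightarrow> 'u \<times> 'v"
    and \<pi>V :: "'v \<Rightarrow> real" and \<tau> :: "'a \<Rightarrow> real"
  assumes "prob_space M"
    and "irreducible_gen QU" and "irreducible_gen QV"
    and "stationary_dist QV \<pi>V"
    and "ctmc M (prod_gen QU QV) X"
    and "stopping_time (nat_filtration M X) \<tau>"
    and "\<forall>\<omega>\<in>space M. 0 \<le> \<tau> \<omega>"
    and "AE \<omega> in M. 0 < \<tau> \<omega>"
    and "integrable M \<tau>"
    and "distr M (count_space UNIV) (\<lambda>\<omega>. snd (X 0 \<omega>)) =
         distr M (count_space UNIV) (\<lambda>\<omega>. snd (X (\<tau> \<omega>) \<omega>))"
  shows "\<forall>v. (\<integral>\<omega>. (\<integral>t\<in>{0..\<tau> \<omega>}. (if snd (X t \<omega>) = v then 1 else 0) \<partial>lborel) \<partial>M)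
           = (\<integral>\<omega>. \<tau> \<omega> \<partial>M) * \<pi>V v"
proof
  fix v
  interpret ctmc_stopping M "prod_gen QU QV" X \<tau>
    using assms(1,5,6,7,9) by (simp add: ctmc_stopping_def ctmc_stopping_axioms_def ctmc_process_def
        ctmc_process_axioms_def)
  have "generator QU"
    using assms(2) by (simp add: irreducible_gen_def)
  then have "invariant_measure QV (lumped_occupation snd)"
    using assms(10) by (intro lumped_occupation_invariant gen_op_prod_gen_snd)
  then have "lumped_occupation snd v = expectation \<tau> * \<pi>V v"
    using invariant_measure_eq_stationary[OF assms(3,4)] sum_lumped_occupation by metis
  then show "(\<integral>\<omega>. (\<integral>t\<in>{0..\<tau> \<omega>}. (if snd (X t \<omega>) = v then 1 else 0) \<partial>lborel) \<partial>M) = expectation \<tau> * \<pi>V v"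
    by (simp add: lumped_occupation_def occupation_def[abs_def])
qed

end
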